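(* Let $m\ge 2$ be an integer and let $Y_1,Y_2,\ldots$ be independent, identically distributed random variables with values in $\{0,1,2,\ldots\}$ and common probability function $f(y)=\mathbb{P}(Y_1=y)$, where $f(y)=0$ for $y\notin\{0,1,\ldots,m\}$ and $f(m)>0$. Assume $\mathbb{E}(Y_1)<1$. For an integer $u\ge 0$ consider the Gerber–Dickson risk process $$U(t)=u+t-\sum_{j=1}^{t}Y_j,\qquad t=0,1,2,\ldots,$$ the time of ruin $\tau=\min\{t\ge 1: U(t)\le 0\}$ (with $\min\emptyset=\infty$), and the ultimate ruin probability $\psi(u)=\mathbb{P}(\tau<\infty\mid U(0)=u)$. Define $$\alpha_0=\frac{1-f(1)}{f(0)},\qquad \alpha_k=-\frac{f(k+1)}{f(0)}\quad (k=1,\ldots,m-1).$$ Then: (i) $\psi$ satisfies the linear recurrence $$\psi(u+m+1)=\sum_{k=0}^{m-1}\alpha_k\,\psi(u+m-k)\qquad\text{for all } u\ge 0;$$ (ii) if $z_1,\ldots,z_\ell$ are the distinct (possibly complex) roots of the characteristic polynomial $$p(y)=y^m-\sum_{k=0}^{m-1}\alpha_k\,y^{m-1-k},$$ with multiplicities $n_1,\ldots,n_\ell$ respectively (so $n_1+\cdots+n_\ell=m$), then there exist constants $b_{k,j}\in\mathbb{C}$ ($1\le k\le \ell$, $1\le j\le n_k$) such that $$\psi(u)=\sum_{k=1}^{\ell}\sum_{j=1}^{n_k} b_{k,j}\,u^{j-1}\,z_k^{u}\qquad\text{for all } u\ge 1.$$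
   Context: The net profit condition $\mathbb{E}(Y_1)<1$ implies $f(0)>0$, so the coefficients $\alpha_k$ are well defined. The constants $b_{k,j}$ are those matching the values $\psi(1),\ldots,\psi(m)$. *)

theory Defs
  imports "HOL-Probability.Probability" "HOL-Computational_Algebra.Polynomial"
begin

definition ruin_prob :: "'a measure \<Rightarrow> (nat \<Rightarrow> 'a \<Rightarrow> nat) \<Rightarrow> nat \<Rightarrow> real" where
  "ruin_prob M Y u = measure M {\<omega> \<in> space M.
      \<exists>t::nat. t \<ge> 1 \<and> int u + int t - (\<Sum>j=1..t. int (Y j \<omega>)) \<le> 0}"

definition alpha :: "(nat \<Rightarrow> real) \<Rightarrow> nat \<Rightarrow> real" where
  "alpha f k = (if k = 0 then (1 - f 1) / f 0 else - f (k + 1) / f 0)"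

definition char_poly :: "(nat \<Rightarrow> real) \<Rightarrow> nat \<Rightarrow> complex poly" where
  "char_poly f m = monom 1 m - (\<Sum>k<m. monom (complex_of_real (alpha f k)) (m - 1 - k))"

end

theory Submission
  imports Defs "HOL-Computational_Algebra.Fundamental_Theorem_Algebra"
begin

text \<open>Conditioning on the first claim gives the first-step equation
  \<open>\<psi>(u) = \<Sum>\<^sub>y f(y) (if y \<ge> u + 1 then 1 else \<psi>(u + 1 - y))\<close>.
  It is the limit \<open>T \<rightarrow> \<infinity>\<close> of the same identity for ruin within \<open>T\<close> periods, which
  is a finite sum over the claim paths in \<open>{0..m}\<^sup>T\<close> by independence.  Taken at \<open>u + m\<close> and
  solved for \<open>\<psi>(u + m + 1)\<close>, which needs \<open>f(0) > 0\<close> (a consequence of \<open>E Y\<^sub>1 < 1\<close>), it is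
  recurrence (i).

  Part (ii) is the classical solution of a linear recurrence with constant coefficients whose
  characteristic polynomial \<open>p\<close> has \<open>p(0) = f(m)/f(0) \<noteq> 0\<close>.  Splitting off a linear factor
  \<open>y - z\<close> of \<open>p\<close> lowers the order by one, and the remaining first-order equation
  \<open>a(n+1) = z a(n) + (quasi-polynomial)\<close> is solved by summing polynomial-geometric series:
  \<open>\<Sum>i<n. P(i) r\<^sup>i = R(n) r\<^sup>n - R(0)\<close> for a polynomial \<open>R\<close> of degree at most \<open>deg P\<close>, or
  \<open>deg P + 1\<close> if \<open>r = 1\<close>.\<close>

definition shift_diff :: "'a::comm_ring_1 \<Rightarrow> 'a poly \<Rightarrow> 'a poly" where
  "shift_diff r R = smult r (pcompose R [:1, 1:]) - R"

lemma poly_shift_diff [simp]: "poly (shift_diff r R) x = r * poly R (x + 1) - poly R x"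
  by (simp add: shift_diff_def poly_pcompose add.commute)

lemma shift_diff_0 [simp]: "shift_diff r 0 = 0"
  by (simp add: shift_diff_def)

lemma shift_diff_add: "shift_diff r (p + q) = shift_diff r p + shift_diff r q"
  by (simp add: shift_diff_def pcompose_add smult_add_right)

lemma pcompose_monom_linear: "pcompose (monom c k) [:a, 1:] = smult c ([:a, 1:] ^ k)"
  by (induction k) (simp_all add: monom_0 monom_Suc pcompose_pCons pcompose_smult algebra_simps)

lemma coeff_shift_diff_monom:
  "coeff (shift_diff r (monom c k)) i = r * c * of_nat (k choose i) - (if i = k then c else 0)"
proof -
  have "coeff ([:1, 1:] ^ k :: 'a poly) i = of_nat (k choose i)"
    by (cases "i \<le> k") (simp_all add: coeff_linear_poly_power coeff_eq_0 degree_linear_power binomial_eq_0)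
  then show ?thesis
    by (simp add: shift_diff_def pcompose_monom_linear coeff_monom)
qed

lemma shift_diff_lead_monom:
  fixes r :: "'a::field_char_0"
  obtains R0 where "degree R0 \<le> degree P + (if r = 1 then 1 else 0)"
    and "\<And>i. degree P \<le> i \<Longrightarrow> coeff (shift_diff r R0) i = coeff P i"
proof -
  define d where "d = degree P"
  define R0 where "R0 = (if r = 1 then monom (lead_coeff P / of_nat (d + 1)) (d + 1)
                         else monom (lead_coeff P / (r - 1)) d)"
  have "coeff (shift_diff r R0) d = lead_coeff P"
  proof (cases "r = 1")
    case True
    then show ?thesis
      by (simp add: R0_def coeff_shift_diff_monom del: of_nat_Suc)
  next
    case False
    have "r * (lead_coeff P / (r - 1)) - lead_coeff P / (r - 1) = (r - 1) * (lead_coeff P / (r - 1))"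
      by (simp only: left_diff_distrib mult_1)
    also have "\<dots> = lead_coeff P"
      using False by simp
    finally show ?thesis
      using False by (simp add: R0_def coeff_shift_diff_monom)
  qed
  moreover have "coeff (shift_diff r R0) i = 0" if "d < i" for i
    using that by (auto simp: R0_def coeff_shift_diff_monom binomial_eq_0 Suc_le_eq le_less)
  moreover have "degree R0 \<le> d + (if r = 1 then 1 else 0)"
    by (simp add: R0_def degree_monom_le)
  ultimately show ?thesis
    using that unfolding d_def by (metis coeff_eq_0 le_eq_less_or_eq)
qed

lemma shift_diff_solvable:
  fixes r :: "'a::field_char_0"
  shows "\<exists>R. shift_diff r R = P \<and> degree R \<le> degree P + (if r = 1 then 1 else 0)"
proof (induction "degree P" arbitrary: P rule: less_induct)
  case less
  define e :: nat where "e = (if r = 1 then 1 else 0)"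
  obtain R0 where R0_deg: "degree R0 \<le> degree P + e"
    and R0_top: "\<And>i. degree P \<le> i \<Longrightarrow> coeff (shift_diff r R0) i = coeff P i"
    using shift_diff_lead_monom[where P = P and r = r] unfolding e_def by blast
  obtain R' where R': "shift_diff r R' = P - shift_diff r R0" "degree R' \<le> degree P + e"
  proof (cases "P - shift_diff r R0 = 0")
    case True
    then show ?thesis
      by (intro that[of 0]) simp_all
  next
    case False
    then have "degree (P - shift_diff r R0) < degree P"
      using R0_top by (metis coeff_diff diff_self leading_coeff_0_iff not_le_imp_less)
    moreover from this obtain R' where
      "shift_diff r R' = P - shift_diff r R0" "degree R' \<le> degree (P - shift_diff r R0) + e"
      using less unfolding e_def by blast
    ultimately show ?thesis
      using that by simp
  qed
  have "shift_diff r (R0 + R') = P"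
    by (simp add: shift_diff_add R'(1))
  moreover have "degree (R0 + R') \<le> degree P + e"
    using R0_deg R'(2) by (simp add: degree_add_le)
  ultimately show ?case
    unfolding e_def by blast
qed

lemma sum_poly_times_power_closed_form:
  fixes r :: "'a::field_char_0"
  obtains R where "degree R \<le> degree P + (if r = 1 then 1 else 0)"
    and "\<And>n. (\<Sum>i<n. poly P (of_nat i) * r ^ i) = poly R (of_nat n) * r ^ n - poly R 0"
proof -
  obtain R where R: "shift_diff r R = P" "degree R \<le> degree P + (if r = 1 then 1 else 0)"
    using shift_diff_solvable by blast
  have "(\<Sum>i<n. poly P (of_nat i) * r ^ i) = poly R (of_nat n) * r ^ n - poly R 0" for n
  proof -
    define g where "g i = poly R (of_nat i) * r ^ i" for i
    have "poly P (of_nat i) * r ^ i = g (Suc i) - g i" for i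
      by (simp flip: R(1) add: g_def algebra_simps)
    then have "(\<Sum>i<n. poly P (of_nat i) * r ^ i) = (\<Sum>i<n. g (Suc i) - g i)"
      by simp
    also have "\<dots> = g n - g 0"
      by (rule sum_lessThan_telescope)
    finally show ?thesis
      by (simp add: g_def)
  qed
  with R(2) show ?thesis
    using that by blast
qed

text \<open>\<open>poly_shift_op p a\<close> is \<open>p(E) a\<close> for the shift operator \<open>(E a)(n) = a(n + 1)\<close>.\<close>

definition poly_shift_op :: "'a::comm_ring_1 poly \<Rightarrow> (nat \<Rightarrow> 'a) \<Rightarrow> nat \<Rightarrow> 'a" where
  "poly_shift_op p a n = (\<Sum>i\<le>degree p. coeff p i * a (n + i))"

lemma poly_shift_op_altdef:
  "degree p \<le> N \<Longrightarrow> poly_shift_op p a n = (\<Sum>i\<le>N. coeff p i * a (n + i))"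
  unfolding poly_shift_op_def by (intro sum.mono_neutral_left) (auto simp: coeff_eq_0)

lemma poly_shift_op_linear_factor:
  "poly_shift_op ([:-z, 1:] * q) a n = poly_shift_op q (\<lambda>k. a (Suc k) - z * a k) n"
proof -
  define d where "d = degree q"
  have deg: "degree ([:-z, 1:] * q) \<le> Suc d"
    using degree_mult_le[of "[:-z, 1:]" q] by (simp add: d_def)
  have coeff_prod: "coeff ([:-z, 1:] * q) i = (case i of 0 \<Rightarrow> 0 | Suc j \<Rightarrow> coeff q j) - z * coeff q i" for i
    by (cases i) simp_all
  have "poly_shift_op ([:-z, 1:] * q) a n
      = (\<Sum>i\<le>Suc d. (case i of 0 \<Rightarrow> 0 | Suc j \<Rightarrow> coeff q j) * a (n + i) - z * (coeff q i * a (n + i)))"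
    by (simp only: poly_shift_op_altdef[OF deg] coeff_prod left_diff_distrib mult.assoc)
  also have "\<dots> = (\<Sum>i\<le>Suc d. (case i of 0 \<Rightarrow> 0 | Suc j \<Rightarrow> coeff q j) * a (n + i))
        - z * (\<Sum>i\<le>Suc d. coeff q i * a (n + i))"
    by (simp only: sum_subtractf sum_distrib_left)
  also have "(\<Sum>i\<le>Suc d. (case i of 0 \<Rightarrow> 0 | Suc j \<Rightarrow> coeff q j) * a (n + i))
      = (\<Sum>i\<le>d. coeff q i * a (Suc (n + i)))"
    by (subst sum.atMost_Suc_shift) simp
  also have "(\<Sum>i\<le>Suc d. coeff q i * a (n + i)) = (\<Sum>i\<le>d. coeff q i * a (n + i))"
    by (simp add: d_def coeff_eq_0)
  finally show ?thesis
    by (simp add: poly_shift_op_def d_def algebra_simps sum_subtractf sum_distrib_left)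
qed

lemma first_order_recurrence_closed_form:
  fixes a c :: "nat \<Rightarrow> 'a::comm_semiring_1"
  assumes "\<And>n. a (Suc n) = z * a n + c n"
  shows "a n = z ^ n * a 0 + (\<Sum>i<n. z ^ (n - 1 - i) * c i)"
proof (induction n)
  case (Suc n)
  have "(\<Sum>i<n. z * (z ^ (n - 1 - i) * c i)) = (\<Sum>i<n. z ^ (n - i) * c i)"
  proof (intro sum.cong refl)
    fix i
    assume "i \<in> {..<n}"
    then obtain k where "n = Suc (i + k)"
      using less_imp_Suc_add by blast
    then show "z * (z ^ (n - 1 - i) * c i) = z ^ (n - i) * c i"
      by (simp add: mult.assoc)
  qed
  with Suc show ?case
    by (simp add: assms algebra_simps sum_distrib_left)
qed simp

lemma sum_power_times_quasi_poly_closed_form: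
  fixes z w :: "'a::field_char_0"
  assumes "z \<noteq> 0"
  obtains R where "degree R \<le> degree Q + (if w = z then 1 else 0)"
    and "\<And>n. (\<Sum>i<n. z ^ (n - 1 - i) * (poly Q (of_nat i) * w ^ i))
               = poly R (of_nat n) * w ^ n - z ^ n * poly R 0"
proof -
  obtain R where R_deg: "degree R \<le> degree Q + (if w / z = 1 then 1 else 0)"
    and R_sum: "\<And>n. (\<Sum>i<n. poly Q (of_nat i) * (w / z) ^ i) = poly R (of_nat n) * (w / z) ^ n - poly R 0"
    using sum_poly_times_power_closed_form[where P = Q and r = "w / z"] by blast
  have "(\<Sum>i<n. z ^ (n - 1 - i) * (poly Q (of_nat i) * w ^ i))
      = poly (smult (1 / z) R) (of_nat n) * w ^ n - z ^ n * poly (smult (1 / z) R) 0" for n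
  proof -
    have "z ^ (n - 1 - i) * (poly Q (of_nat i) * w ^ i) = z ^ n / z * (poly Q (of_nat i) * (w / z) ^ i)"
      if "i < n" for i
    proof -
      obtain k where "n = Suc (i + k)"
        using less_imp_Suc_add \<open>i < n\<close> by blast
      with \<open>z \<noteq> 0\<close> show ?thesis
        by (simp add: power_add power_divide field_simps)
    qed
    then have "(\<Sum>i<n. z ^ (n - 1 - i) * (poly Q (of_nat i) * w ^ i))
        = z ^ n / z * (\<Sum>i<n. poly Q (of_nat i) * (w / z) ^ i)"
      by (simp add: sum_distrib_left)
    also have "\<dots> = z ^ n / z * (poly R (of_nat n) * (w / z) ^ n - poly R 0)"
      by (simp only: R_sum)
    also have "\<dots> = poly (smult (1 / z) R) (of_nat n) * w ^ n - z ^ n * poly (smult (1 / z) R) 0"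
      using \<open>z \<noteq> 0\<close> by (simp add: power_divide field_simps)
    finally show ?thesis .
  qed
  moreover have "degree (smult (1 / z) R) \<le> degree Q + (if w = z then 1 else 0)"
    using R_deg \<open>z \<noteq> 0\<close> by simp
  ultimately show ?thesis
    using that by blast
qed

lemma sum_insert_exponential_term:
  fixes z :: "'a::comm_ring_1"
  assumes "finite S"
  shows "(\<Sum>w\<in>insert z S. poly ((if w \<in> S then R w else 0) + (if w = z then [:c:] else 0)) x * w ^ n)
    = c * z ^ n + (\<Sum>w\<in>S. poly (R w) x * w ^ n)"
proof -
  have "(\<Sum>w\<in>insert z S. poly (if w \<in> S then R w else 0) x * w ^ n) = (\<Sum>w\<in>S. poly (R w) x * w ^ n)"
    using assms by (intro sum.mono_neutral_cong_right) auto
  moreover have "(\<Sum>w\<in>insert z S. poly (if w = z then [:c:] else 0) x * w ^ n) = c * z ^ n"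
  proof -
    have "poly (if w = z then [:c:] else 0) x * w ^ n = (if w = z then c * z ^ n else 0)" for w
      by simp
    with assms show ?thesis
      by (simp add: sum.delta)
  qed
  ultimately show ?thesis
    unfolding poly_add distrib_right sum.distrib by (simp only: add.commute)
qed

lemma first_order_recurrence_quasi_poly:
  fixes z :: "'a::field_char_0"
  assumes "z \<noteq> 0" "finite S"
    and rec: "\<And>n. a (Suc n) = z * a n + (\<Sum>w\<in>S. poly (Q w) (of_nat n) * w ^ n)"
  shows "\<exists>P. (\<forall>n. a n = (\<Sum>w\<in>insert z S. poly (P w) (of_nat n) * w ^ n))
    \<and> (\<forall>w\<in>S - {z}. degree (P w) \<le> degree (Q w))
    \<and> (z \<in> S \<longrightarrow> degree (P z) \<le> degree (Q z) + 1)
    \<and> (z \<notin> S \<longrightarrow> degree (P z) = 0)"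
proof -
  have "\<exists>R. degree R \<le> degree (Q w) + (if w = z then 1 else 0) \<and>
      (\<forall>n. (\<Sum>i<n. z ^ (n - 1 - i) * (poly (Q w) (of_nat i) * w ^ i))
              = poly R (of_nat n) * w ^ n - z ^ n * poly R 0)" for w
    by (rule sum_power_times_quasi_poly_closed_form[OF \<open>z \<noteq> 0\<close>]) blast
  then have "\<exists>R. \<forall>w. degree (R w) \<le> degree (Q w) + (if w = z then 1 else 0) \<and>
      (\<forall>n. (\<Sum>i<n. z ^ (n - 1 - i) * (poly (Q w) (of_nat i) * w ^ i))
              = poly (R w) (of_nat n) * w ^ n - z ^ n * poly (R w) 0)"
    by (intro choice allI)
  then obtain R where R_deg: "\<And>w. degree (R w) \<le> degree (Q w) + (if w = z then 1 else 0)"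
    and R_sum: "\<And>w n. (\<Sum>i<n. z ^ (n - 1 - i) * (poly (Q w) (of_nat i) * w ^ i))
                        = poly (R w) (of_nat n) * w ^ n - z ^ n * poly (R w) 0"
    by blast
  define K where "K = a 0 - (\<Sum>w\<in>S. poly (R w) 0)"
  define P where "P w = (if w \<in> S then R w else 0) + (if w = z then [:K:] else 0)" for w
  have "a n = (\<Sum>w\<in>insert z S. poly (P w) (of_nat n) * w ^ n)" for n
  proof -
    have "a n = z ^ n * a 0 + (\<Sum>i<n. z ^ (n - 1 - i) * (\<Sum>w\<in>S. poly (Q w) (of_nat i) * w ^ i))"
      using rec by (rule first_order_recurrence_closed_form)
    also have "(\<Sum>i<n. z ^ (n - 1 - i) * (\<Sum>w\<in>S. poly (Q w) (of_nat i) * w ^ i))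
        = (\<Sum>w\<in>S. \<Sum>i<n. z ^ (n - 1 - i) * (poly (Q w) (of_nat i) * w ^ i))"
      by (simp only: sum_distrib_left) (rule sum.swap)
    also have "\<dots> = (\<Sum>w\<in>S. poly (R w) (of_nat n) * w ^ n - z ^ n * poly (R w) 0)"
      by (simp only: R_sum)
    also have "z ^ n * a 0 + \<dots> = K * z ^ n + (\<Sum>w\<in>S. poly (R w) (of_nat n) * w ^ n)"
      by (simp add: K_def sum_subtractf sum_distrib_left algebra_simps)
    also have "\<dots> = (\<Sum>w\<in>insert z S. poly (P w) (of_nat n) * w ^ n)"
      unfolding P_def using \<open>finite S\<close> by (rule sum_insert_exponential_term[symmetric])
    finally show ?thesis .
  qed
  moreover have "degree (P w) \<le> degree (Q w)" if "w \<in> S - {z}" for w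
    using that R_deg[of w] by (simp add: P_def)
  moreover have "degree (P z) \<le> degree (Q z) + 1" if "z \<in> S"
    using that R_deg[of z] by (simp add: P_def degree_add_le)
  moreover have "z \<notin> S \<Longrightarrow> degree (P z) = 0"
    by (simp add: P_def)
  ultimately show ?thesis
    by blast
qed

lemma order_linear_factor_mult:
  assumes "q \<noteq> 0"
  shows "order w ([:-z, 1:] * q) = order w q + (if w = z then 1 else 0)"
proof -
  have "order w ([:-z, 1:] * q) = order w [:-z, 1:] + order w q"
    by (rule order_mult) (use assms in \<open>simp del: mult_pCons_left\<close>)
  moreover have "order w [:-z, 1:] = (if w = z then 1 else 0)"
    using order_power_n_n[of z 1] order_0I[of "[:-z, 1:]" w] by auto
  ultimately show ?thesis
    by simp
qed

lemma quasi_poly_linear_factor: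
  fixes q :: "'a::field_char_0 poly"
  assumes pq: "p = [:-z, 1:] * q" and "z \<noteq> 0" "q \<noteq> 0"
    and Q_deg: "\<forall>w. poly q w = 0 \<longrightarrow> degree (Q w) < order w q"
    and Q_rep: "\<forall>n. a (Suc n) - z * a n = (\<Sum>w\<in>{w. poly q w = 0}. poly (Q w) (of_nat n) * w ^ n)"
  shows "\<exists>P. (\<forall>w. poly p w = 0 \<longrightarrow> degree (P w) < order w p)
    \<and> (\<forall>n. a n = (\<Sum>w\<in>{w. poly p w = 0}. poly (P w) (of_nat n) * w ^ n))"
proof -
  have roots: "{w. poly p w = 0} = insert z {w. poly q w = 0}"
    by (auto simp: pq)
  have ord: "order w p = order w q + (if w = z then 1 else 0)" for w
    unfolding pq using \<open>q \<noteq> 0\<close> by (rule order_linear_factor_mult)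
  have "finite {w. poly q w = 0}"
    using \<open>q \<noteq> 0\<close> by (rule poly_roots_finite)
  moreover have "a (Suc n) = z * a n + (\<Sum>w\<in>{w. poly q w = 0}. poly (Q w) (of_nat n) * w ^ n)" for n
    by (simp add: Q_rep[rule_format, symmetric])
  ultimately obtain P where P_rep: "\<forall>n. a n = (\<Sum>w\<in>{w. poly p w = 0}. poly (P w) (of_nat n) * w ^ n)"
    and P_deg: "\<forall>w\<in>{w. poly q w = 0} - {z}. degree (P w) \<le> degree (Q w)"
    and P_deg_z: "poly q z = 0 \<longrightarrow> degree (P z) \<le> degree (Q z) + 1"
    and P_deg_z': "poly q z \<noteq> 0 \<longrightarrow> degree (P z) = 0"
    using first_order_recurrence_quasi_poly[OF \<open>z \<noteq> 0\<close>] unfolding roots by blast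
  have "degree (P w) < order w p" if "poly p w = 0" for w
  proof (cases "w = z")
    case True
    then show ?thesis
      using P_deg_z P_deg_z' Q_deg ord[of z] by (cases "poly q z = 0") auto
  next
    case False
    with that roots have "poly q w = 0"
      by auto
    with False P_deg have "degree (P w) \<le> degree (Q w)"
      by blast
    also have "\<dots> < order w q"
      using Q_deg \<open>poly q w = 0\<close> by blast
    finally show ?thesis
      using False by (simp add: ord)
  qed
  with P_rep show ?thesis
    by blast
qed

lemma linear_recurrence_quasi_poly:
  fixes p :: "complex poly"
  assumes "poly p 0 \<noteq> 0" and "\<And>n. poly_shift_op p a n = 0"
  shows "\<exists>P. (\<forall>z. poly p z = 0 \<longrightarrow> degree (P z) < order z p)
    \<and> (\<forall>n. a n = (\<Sum>z\<in>{z. poly p z = 0}. poly (P z) (of_nat n) * z ^ n))"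
  using assms
proof (induction "degree p" arbitrary: p a)
  case 0
  then obtain c where "p = [:c:]" "c \<noteq> 0"
    by (metis degree_eq_zeroE poly_const_conv)
  with "0.prems"(2) show ?case
    by (intro exI[of _ "\<lambda>_. 0"]) (simp add: poly_shift_op_def)
next
  case (Suc d)
  then have "\<not> constant (poly p)"
    by (simp add: constant_degree)
  then obtain z where "poly p z = 0"
    using fundamental_theorem_of_algebra by blast
  then obtain q where pq: "p = [:-z, 1:] * q"
    by (metis dvdE poly_eq_0_iff_dvd)
  with Suc.prems(1) have "z \<noteq> 0" "q \<noteq> 0" "poly q 0 \<noteq> 0"
    by auto
  have "degree p = degree q + 1"
    unfolding pq by (subst degree_mult_eq) (use \<open>q \<noteq> 0\<close> in auto)
  with Suc.hyps(2) have "d = degree q"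
    by simp
  moreover have "poly_shift_op q (\<lambda>k. a (Suc k) - z * a k) n = 0" for n
    using Suc.prems(2)[of n] by (simp only: pq poly_shift_op_linear_factor)
  ultimately obtain Q where "\<forall>w. poly q w = 0 \<longrightarrow> degree (Q w) < order w q"
    and "\<forall>n. a (Suc n) - z * a n = (\<Sum>w\<in>{w. poly q w = 0}. poly (Q w) (of_nat n) * w ^ n)"
    using Suc.hyps(1) \<open>poly q 0 \<noteq> 0\<close> by blast
  with pq \<open>z \<noteq> 0\<close> \<open>q \<noteq> 0\<close> show ?case
    by (rule quasi_poly_linear_factor)
qed

lemma poly_eq_sum_coeff_upto:
  fixes Q :: "'a::comm_semiring_1 poly"
  assumes "degree Q < N"
  shows "poly Q x = (\<Sum>j=1..N. coeff Q (j - 1) * x ^ (j - 1))"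
proof -
  have "poly Q x = (\<Sum>i\<le>degree Q. coeff Q i * x ^ i)"
    by (rule poly_altdef)
  also have "\<dots> = (\<Sum>i<N. coeff Q i * x ^ i)"
    using assms by (intro sum.mono_neutral_left) (auto simp: coeff_eq_0)
  also have "\<dots> = (\<Sum>j=1..N. coeff Q (j - 1) * x ^ (j - 1))"
    using sum_bounds_lt_plus1[of "\<lambda>j. coeff Q (j - 1) * x ^ (j - 1)" N] by simp
  finally show ?thesis .
qed

lemma coeff_char_poly:
  "coeff (char_poly f m) i
     = (if i = m then 1 else 0) - (\<Sum>k<m. if m - 1 - k = i then complex_of_real (alpha f k) else 0)"
  by (simp add: char_poly_def coeff_sum coeff_monom)

lemma degree_char_poly_le: "degree (char_poly f m) \<le> m"
  by (rule degree_le) (auto simp: coeff_char_poly intro!: sum.neutral)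

lemma poly_char_poly_0:
  assumes "m \<ge> 1"
  shows "poly (char_poly f m) 0 = - complex_of_real (alpha f (m - 1))"
proof -
  have "(\<Sum>k<m. if m - 1 - k = 0 then complex_of_real (alpha f k) else 0)
      = (\<Sum>k<m. if k = m - 1 then complex_of_real (alpha f k) else 0)"
    by (intro sum.cong refl) auto
  with assms show ?thesis
    by (simp add: poly_0_coeff_0 coeff_char_poly)
qed

lemma poly_shift_op_char_poly:
  "poly_shift_op (char_poly f m) a n = a (n + m) - (\<Sum>k<m. complex_of_real (alpha f k) * a (n + m - 1 - k))"
proof -
  have "poly_shift_op (char_poly f m) a n = (\<Sum>i\<le>m. coeff (char_poly f m) i * a (n + i))"
    by (rule poly_shift_op_altdef[OF degree_char_poly_le])
  also have "\<dots> = (\<Sum>i\<le>m. if i = m then a (n + i) else 0)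
      - (\<Sum>i\<le>m. \<Sum>k<m. if m - 1 - k = i then complex_of_real (alpha f k) * a (n + i) else 0)"
  proof -
    have "coeff (char_poly f m) i * a (n + i) = (if i = m then a (n + i) else 0)
        - (\<Sum>k<m. if m - 1 - k = i then complex_of_real (alpha f k) * a (n + i) else 0)" for i
      by (simp only: coeff_char_poly left_diff_distrib sum_distrib_right) (auto intro!: sum.cong)
    then show ?thesis
      by (simp only: sum_subtractf)
  qed
  also have "(\<Sum>i\<le>m. \<Sum>k<m. if m - 1 - k = i then complex_of_real (alpha f k) * a (n + i) else 0)
      = (\<Sum>k<m. complex_of_real (alpha f k) * a (n + m - 1 - k))"
    by (subst sum.swap) (auto intro!: sum.cong simp: sum.delta)
  finally show ?thesis
    by simp
qed

lemma quasi_poly_term_shift: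
  fixes p :: "'a::field_char_0 poly"
  assumes "z \<noteq> 0"
  shows "degree (smult (1 / z) (pcompose p [:-1, 1:])) = degree p"
    and "poly (smult (1 / z) (pcompose p [:-1, 1:])) (of_nat (Suc n)) * z ^ Suc n = poly p (of_nat n) * z ^ n"
  using assms by (simp_all add: degree_pcompose poly_pcompose)

lemma char_poly_recurrence_quasi_poly:
  fixes \<psi> :: "nat \<Rightarrow> real"
  assumes "m \<ge> 1" and "alpha f (m - 1) \<noteq> 0"
    and rec: "\<And>u. \<psi> (u + m + 1) = (\<Sum>k<m. alpha f k * \<psi> (u + m - k))"
  shows "\<exists>b :: complex \<Rightarrow> nat \<Rightarrow> complex. \<forall>u::nat. u \<ge> 1 \<longrightarrow>
            complex_of_real (\<psi> u)
              = (\<Sum>z\<in>{z. poly (char_poly f m) z = 0}.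
                   \<Sum>j=1..order z (char_poly f m). b z j * of_nat u ^ (j - 1) * z ^ u)"
proof -
  define p where "p = char_poly f m"
  define a where "a n = complex_of_real (\<psi> (Suc n))" for n
  have p0: "poly p 0 \<noteq> 0"
    using assms(1,2) by (simp add: p_def poly_char_poly_0)
  have "poly_shift_op p a n = 0" for n
    using rec[of n] \<open>m \<ge> 1\<close>
    by (simp add: p_def poly_shift_op_char_poly a_def Suc_diff_Suc flip: of_real_mult of_real_sum)
  with p0 obtain P where P_deg: "\<forall>z. poly p z = 0 \<longrightarrow> degree (P z) < order z p"
    and P_rep: "\<forall>n. a n = (\<Sum>z\<in>{z. poly p z = 0}. poly (P z) (of_nat n) * z ^ n)"
    using linear_recurrence_quasi_poly by blast
  define Pu where "Pu z = smult (1 / z) (pcompose (P z) [:-1, 1:])" for z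
  define b where "b z j = coeff (Pu z) (j - 1)" for z j
  have "complex_of_real (\<psi> u)
      = (\<Sum>z\<in>{z. poly p z = 0}. \<Sum>j=1..order z p. b z j * of_nat u ^ (j - 1) * z ^ u)"
    if "u \<ge> 1" for u
  proof -
    obtain n where u: "u = Suc n"
      using \<open>u \<ge> 1\<close> by (cases u) auto
    have "poly (P z) (of_nat n) * z ^ n = (\<Sum>j=1..order z p. b z j * of_nat u ^ (j - 1) * z ^ u)"
      if "poly p z = 0" for z
    proof -
      have "z \<noteq> 0"
        using that p0 by auto
      then have "degree (Pu z) < order z p"
        using P_deg that by (simp only: Pu_def quasi_poly_term_shift(1)[OF \<open>z \<noteq> 0\<close>])
      then have "poly (Pu z) (of_nat u) = (\<Sum>j=1..order z p. b z j * of_nat u ^ (j - 1))"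
        unfolding b_def by (rule poly_eq_sum_coeff_upto)
      moreover have "poly (P z) (of_nat n) * z ^ n = poly (Pu z) (of_nat u) * z ^ u"
        unfolding Pu_def u by (rule quasi_poly_term_shift(2)[OF \<open>z \<noteq> 0\<close>, symmetric])
      ultimately show ?thesis
        by (simp add: sum_distrib_right)
    qed
    with P_rep show ?thesis
      by (simp add: a_def u)
  qed
  then show ?thesis
    unfolding p_def by blast
qed

fun ruined_within :: "nat \<Rightarrow> nat list \<Rightarrow> bool" where
  "ruined_within u [] = False"
| "ruined_within u (y # ys) = (u + 1 \<le> y \<or> ruined_within (u + 1 - y) ys)"

lemma ruined_within_iff:
  "ruined_within u (map W [0..<T]) \<longleftrightarrow> (\<exists>t. 1 \<le> t \<and> t \<le> T \<and> int u + int t - (\<Sum>i<t. int (W i)) \<le> 0)"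
proof (induction T arbitrary: u W)
  case (Suc T)
  have split_first: "(\<exists>t. 1 \<le> t \<and> t \<le> Suc T \<and> P t) \<longleftrightarrow> P 1 \<or> (\<exists>t. 1 \<le> t \<and> t \<le> T \<and> P (Suc t))"
    for P :: "nat \<Rightarrow> bool"
  proof
    assume "\<exists>t. 1 \<le> t \<and> t \<le> Suc T \<and> P t"
    then obtain t where "1 \<le> t" "t \<le> Suc T" "P t"
      by blast
    then show "P 1 \<or> (\<exists>t. 1 \<le> t \<and> t \<le> T \<and> P (Suc t))"
      by (cases "t = 1") (auto intro!: exI[of _ "t - 1"])
  qed auto
  show ?case
  proof (cases "u + 1 \<le> W 0")
    case True
    then show ?thesis
      by (auto simp: map_upt_Suc simp del: upt_Suc intro!: exI[of _ 1])
  next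
    case False
    have step: "int u + int (Suc t) - (\<Sum>i<Suc t. int (W i))
        = int (u + 1 - W 0) + int t - (\<Sum>i<t. int (W (Suc i)))" for t
      using False by (subst sum.lessThan_Suc_shift) simp
    have "ruined_within u (map W [0..<Suc T])
        \<longleftrightarrow> ruined_within (u + 1 - W 0) (map (\<lambda>i. W (Suc i)) [0..<T])"
      using False by (simp add: map_upt_Suc del: upt_Suc)
    also have "\<dots> \<longleftrightarrow> (\<exists>t. 1 \<le> t \<and> t \<le> T \<and> int u + int (Suc t) - (\<Sum>i<Suc t. int (W i)) \<le> 0)"
      unfolding step by (rule Suc.IH)
    also have "\<dots> \<longleftrightarrow> (\<exists>t. 1 \<le> t \<and> t \<le> Suc T \<and> int u + int t - (\<Sum>i<t. int (W i)) \<le> 0)"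
      using False by (subst split_first) simp
    finally show ?thesis .
  qed
qed simp

definition claim_paths :: "nat \<Rightarrow> nat \<Rightarrow> nat list set" where
  "claim_paths m T = {ys. set ys \<subseteq> {..m} \<and> length ys = T}"

lemma finite_claim_paths: "finite (claim_paths m T)"
  unfolding claim_paths_def by (rule finite_lists_length_eq) simp

lemma sum_claim_paths_Suc:
  "(\<Sum>ys\<in>claim_paths m (Suc T). g ys) = (\<Sum>y\<le>m. \<Sum>ys\<in>claim_paths m T. g (y # ys))"
proof -
  have "claim_paths m (Suc T) = (\<lambda>(y, ys). y # ys) ` ({..m} \<times> claim_paths m T)"
    by (auto simp: claim_paths_def length_Suc_conv image_iff)
  moreover have "inj_on (\<lambda>(y, ys). y # ys) ({..m} \<times> claim_paths m T)"
    by (auto simp: inj_on_def)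
  ultimately show ?thesis
    by (simp add: sum.reindex sum.cartesian_product prod.case_distrib)
qed

lemma sum_prod_list_claim_paths:
  fixes f :: "nat \<Rightarrow> 'a::comm_semiring_1"
  shows "(\<Sum>ys\<in>claim_paths m T. prod_list (map f ys)) = (\<Sum>y\<le>m. f y) ^ T"
proof (induction T)
  case 0
  have "claim_paths m 0 = {[]}"
    by (auto simp: claim_paths_def)
  then show ?case
    by simp
next
  case (Suc T)
  then show ?case
    by (simp add: sum_claim_paths_Suc sum_distrib_left sum_distrib_right flip: sum_distrib_left)
qed

definition ruin_within_prob :: "(nat \<Rightarrow> real) \<Rightarrow> nat \<Rightarrow> nat \<Rightarrow> nat \<Rightarrow> real" where
  "ruin_within_prob f m T u = (\<Sum>ys\<in>claim_paths m T. if ruined_within u ys then prod_list (map f ys) else 0)"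

lemma ruin_within_prob_Suc:
  assumes "(\<Sum>y\<le>m. f y) = 1"
  shows "ruin_within_prob f m (Suc T) u
    = (\<Sum>y\<le>m. f y * (if u + 1 \<le> y then 1 else ruin_within_prob f m T (u + 1 - y)))"
  unfolding ruin_within_prob_def sum_claim_paths_Suc
proof (intro sum.cong refl)
  fix y
  show "(\<Sum>ys\<in>claim_paths m T. if ruined_within u (y # ys) then prod_list (map f (y # ys)) else 0)
      = f y * (if u + 1 \<le> y
               then 1 else \<Sum>ys\<in>claim_paths m T. if ruined_within (u + 1 - y) ys then prod_list (map f ys) else 0)"
  proof (cases "u + 1 \<le> y")
    case True
    then show ?thesis
      using assms sum_prod_list_claim_paths[of f m T] by (simp add: sum_distrib_left[symmetric])
  next
    case False
    then show ?thesis
      by (simp add: sum_distrib_left if_distrib cong: if_cong)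
  qed
qed

locale discrete_risk_model = prob_space M for M :: "'a measure" +
  fixes Y :: "nat \<Rightarrow> 'a \<Rightarrow> nat" and f :: "nat \<Rightarrow> real" and m :: nat
  assumes indep_claims: "indep_vars (\<lambda>_. count_space UNIV) Y {1..}"
    and claim_distr: "\<And>j y. j \<ge> 1 \<Longrightarrow> prob {\<omega> \<in> space M. Y j \<omega> = y} = f y"
    and claim_bound: "\<And>y. y > m \<Longrightarrow> f y = 0"
begin

definition claims :: "nat \<Rightarrow> 'a \<Rightarrow> nat list" where
  "claims T \<omega> = map (\<lambda>i. Y (Suc i) \<omega>) [0..<T]"

lemma sets_claim_eq: "j \<ge> 1 \<Longrightarrow> {\<omega> \<in> space M. Y j \<omega> = y} \<in> events"
  using indep_claims unfolding indep_vars_def by (auto intro: measurable_sets_Collect)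

lemma sets_claims_eq: "{\<omega> \<in> space M. claims T \<omega> = ys} \<in> events"
proof -
  have "{\<omega> \<in> space M. claims T \<omega> = ys}
      = {\<omega> \<in> space M. length ys = T \<and> (\<forall>i\<in>{..<T}. Y (Suc i) \<omega> = ys ! i)}"
    by (auto simp: claims_def list_eq_iff_nth_eq)
  also have "\<dots> \<in> events"
    by (intro sets.sets_Collect_conj sets.sets_Collect_const sets.sets_Collect_finite_All sets_claim_eq) auto
  finally show ?thesis .
qed

lemma sets_claims_pred: "{\<omega> \<in> space M. Q (claims T \<omega>)} \<in> events"
proof -
  have "{\<omega> \<in> space M. Q (claims T \<omega>)} = {\<omega> \<in> space M. \<exists>ys\<in>{ys. Q ys}. claims T \<omega> = ys}"
    by auto
  also have "\<dots> \<in> events"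
    by (intro sets.sets_Collect_countable_Ex' sets_claims_eq countableI_type)
  finally show ?thesis .
qed

lemma prob_claims_eq:
  assumes "length ys = T"
  shows "prob {\<omega> \<in> space M. claims T \<omega> = ys} = prod_list (map f ys)"
proof (cases "T = 0")
  case True
  with assms show ?thesis
    by (simp add: claims_def prob_space)
next
  case False
  define A where "A j = {\<omega> \<in> space M. Y j \<omega> = ys ! (j - 1)}" for j
  have "indep_events A {1..}"
    unfolding A_def by (rule indep_eventsI_indep_vars[OF indep_claims]) simp
  then have "prob (\<Inter>j\<in>Suc ` {..<T}. A j) = (\<Prod>j\<in>Suc ` {..<T}. prob (A j))"
    unfolding indep_events_def by (elim conjE allE[of _ "Suc ` {..<T}"]) (use False in auto)
  also have "\<dots> = (\<Prod>i<T. f (ys ! i))"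
    by (simp add: prod.reindex A_def claim_distr)
  also have "\<dots> = prod_list (map f ys)"
  proof -
    have "map f ys = map (\<lambda>i. f (ys ! i)) [0..<T]"
      using assms by (simp add: list_eq_iff_nth_eq)
    then show ?thesis
      by (simp add: prod.distinct_set_conv_list[symmetric] atLeast0LessThan)
  qed
  also have "(\<Inter>j\<in>Suc ` {..<T}. A j) = {\<omega> \<in> space M. claims T \<omega> = ys}"
    using assms False by (auto simp: claims_def list_eq_iff_nth_eq A_def)
  finally show ?thesis .
qed

lemma AE_claim_neq:
  assumes "j \<ge> 1" and "f y = 0"
  shows "AE \<omega> in M. Y j \<omega> \<noteq> y"
proof (rule AE_I')
  show "{\<omega> \<in> space M. Y j \<omega> = y} \<in> null_sets M"
    using assms sets_claim_eq[of j y] claim_distr[of j y]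
    by (intro null_setsI) (simp_all add: emeasure_eq_measure)
qed auto

lemma AE_claim_le:
  assumes "j \<ge> 1"
  shows "AE \<omega> in M. Y j \<omega> \<le> m"
proof -
  have "AE \<omega> in M. \<forall>y\<in>{m<..}. Y j \<omega> \<noteq> y"
    using assms claim_bound by (intro AE_ball_countable' AE_claim_neq) auto
  then show ?thesis
    by eventually_elim (auto simp: not_le[symmetric])
qed

lemma AE_claims_in_paths: "AE \<omega> in M. claims T \<omega> \<in> claim_paths m T"
proof -
  have "AE \<omega> in M. \<forall>i\<in>{..<T}. Y (Suc i) \<omega> \<le> m"
    by (intro AE_finite_allI AE_claim_le) auto
  then show ?thesis
    by eventually_elim (auto simp: claims_def claim_paths_def)
qed

lemma prob_claims_pred:
  "prob {\<omega> \<in> space M. Q (claims T \<omega>)}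
     = (\<Sum>ys\<in>claim_paths m T. if Q ys then prod_list (map f ys) else 0)"
proof -
  have "AE \<omega> in M. \<omega> \<in> {\<omega> \<in> space M. Q (claims T \<omega>)}
      \<longleftrightarrow> \<omega> \<in> {\<omega> \<in> space M. Q (claims T \<omega>) \<and> claims T \<omega> \<in> claim_paths m T}"
    using AE_claims_in_paths[of T] by eventually_elim auto
  then have "prob {\<omega> \<in> space M. Q (claims T \<omega>)}
      = prob {\<omega> \<in> space M. Q (claims T \<omega>) \<and> claims T \<omega> \<in> claim_paths m T}"
    using sets_claims_pred[of Q T] sets_claims_pred[of "\<lambda>ys. Q ys \<and> ys \<in> claim_paths m T" T]
    by (intro measure_eq_AE) auto
  also have "{\<omega> \<in> space M. Q (claims T \<omega>) \<and> claims T \<omega> \<in> claim_paths m T}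
      = (\<Union>ys\<in>{ys \<in> claim_paths m T. Q ys}. {\<omega> \<in> space M. claims T \<omega> = ys})"
    by auto
  also have "prob \<dots> = (\<Sum>ys\<in>{ys \<in> claim_paths m T. Q ys}. prob {\<omega> \<in> space M. claims T \<omega> = ys})"
    by (intro finite_measure_finite_Union)
      (auto simp: finite_claim_paths disjoint_family_on_def sets_claims_eq)
  also have "\<dots> = (\<Sum>ys\<in>{ys \<in> claim_paths m T. Q ys}. prod_list (map f ys))"
    by (intro sum.cong refl) (simp add: prob_claims_eq claim_paths_def)
  also have "\<dots> = (\<Sum>ys\<in>claim_paths m T. if Q ys then prod_list (map f ys) else 0)"
    by (rule sum.inter_filter[OF finite_claim_paths])
  finally show ?thesis .
qed

lemma sum_claim_distr: "(\<Sum>y\<le>m. f y) = 1"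
  using prob_claims_pred[of "\<lambda>_. True" 1] sum_prod_list_claim_paths[of f m 1]
  by (simp add: prob_space)

lemma ruin_within_prob_tendsto: "(\<lambda>T. ruin_within_prob f m T u) \<longlonglongrightarrow> ruin_prob M Y u"
proof -
  define E where "E T = {\<omega> \<in> space M. ruined_within u (claims T \<omega>)}" for T
  have "E T = {\<omega> \<in> space M. \<exists>t. 1 \<le> t \<and> t \<le> T \<and> int u + int t - (\<Sum>j=1..t. int (Y j \<omega>)) \<le> 0}" for T
    by (simp add: E_def claims_def ruined_within_iff sum.atLeast1_atMost_eq)
  then have "incseq E" and "(\<Union>T. E T) = {\<omega> \<in> space M.
      \<exists>t::nat. t \<ge> 1 \<and> int u + int t - (\<Sum>j=1..t. int (Y j \<omega>)) \<le> 0}"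
    by (auto simp: incseq_def)
  moreover have "range E \<subseteq> events"
    unfolding E_def using sets_claims_pred by blast
  moreover have "prob (E T) = ruin_within_prob f m T u" for T
    unfolding E_def ruin_within_prob_def by (rule prob_claims_pred)
  ultimately show ?thesis
    using finite_Lim_measure_incseq[of E] by (simp add: ruin_prob_def)
qed

lemma ruin_prob_first_step:
  "ruin_prob M Y u = (\<Sum>y\<le>m. f y * (if u + 1 \<le> y then 1 else ruin_prob M Y (u + 1 - y)))"
proof (rule LIMSEQ_unique)
  show "(\<lambda>T. ruin_within_prob f m (Suc T) u) \<longlonglongrightarrow> ruin_prob M Y u"
    using ruin_within_prob_tendsto by (rule LIMSEQ_Suc)
  show "(\<lambda>T. ruin_within_prob f m (Suc T) u)
      \<longlonglongrightarrow> (\<Sum>y\<le>m. f y * (if u + 1 \<le> y then 1 else ruin_prob M Y (u + 1 - y)))"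
    unfolding ruin_within_prob_Suc[OF sum_claim_distr]
    by (intro tendsto_intros) (simp_all add: ruin_within_prob_tendsto)
qed

lemma claim_distr_0_pos:
  assumes "expectation (\<lambda>\<omega>. real (Y 1 \<omega>)) < 1"
  shows "f 0 > 0"
proof (rule ccontr)
  assume "\<not> f 0 > 0"
  then have "f 0 = 0"
    using claim_distr[of 1 0] measure_nonneg[of M "{\<omega> \<in> space M. Y 1 \<omega> = 0}"] by simp
  have "Y 1 \<in> measurable M (count_space UNIV)"
    using indep_claims unfolding indep_vars_def by simp
  then have "(\<lambda>\<omega>. real (Y 1 \<omega>)) \<in> borel_measurable M"
    by simp
  moreover have "AE \<omega> in M. Y 1 \<omega> \<le> m"
    by (rule AE_claim_le) simp
  then have "AE \<omega> in M. norm (real (Y 1 \<omega>)) \<le> real m"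
    by eventually_elim simp
  ultimately have "integrable M (\<lambda>\<omega>. real (Y 1 \<omega>))"
    by (intro integrable_const_bound)
  moreover have "AE \<omega> in M. Y 1 \<omega> \<noteq> 0"
    using \<open>f 0 = 0\<close> by (intro AE_claim_neq) simp_all
  then have "AE \<omega> in M. 1 \<le> real (Y 1 \<omega>)"
    by eventually_elim auto
  ultimately have "1 \<le> expectation (\<lambda>\<omega>. real (Y 1 \<omega>))"
    by (rule integral_ge_const)
  with assms show False
    by simp
qed

lemma ruin_prob_recurrence:
  assumes "f 0 \<noteq> 0" and "m \<ge> 1"
  shows "ruin_prob M Y (u + m + 1) = (\<Sum>k<m. alpha f k * ruin_prob M Y (u + m - k))"
proof -
  define \<psi> where "\<psi> = ruin_prob M Y"
  obtain m' where m': "m = Suc m'"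
    using \<open>m \<ge> 1\<close> by (cases m) auto
  define S where "S = (\<Sum>i<m'. f (Suc (Suc i)) * \<psi> (u + m' - i))"
  \<comment> \<open>The first-step equation at \<open>u + m\<close> involves exactly \<open>\<psi> (u + m + 1), \<dots>, \<psi> (u + 1)\<close>.\<close>
  have "\<psi> (u + m) = (\<Sum>y\<le>m. f y * \<psi> (u + m + 1 - y))"
    unfolding \<psi>_def by (subst ruin_prob_first_step) (auto intro: sum.cong)
  also have "\<dots> = f 0 * \<psi> (u + m + 1) + (\<Sum>i<m. f (Suc i) * \<psi> (u + m - i))"
    unfolding m' by (subst sum.atMost_Suc_shift) (simp add: lessThan_Suc_atMost)
  also have "(\<Sum>i<m. f (Suc i) * \<psi> (u + m - i)) = f 1 * \<psi> (u + m) + S"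
    unfolding S_def m' by (subst sum.lessThan_Suc_shift) simp
  finally have "\<psi> (u + m + 1) = ((1 - f 1) * \<psi> (u + m) - S) / f 0"
    using assms(1) by (simp add: field_simps)
  also have "\<dots> = alpha f 0 * \<psi> (u + m) + (\<Sum>i<m'. alpha f (Suc i) * \<psi> (u + m' - i))"
  proof -
    have "(\<Sum>i<m'. alpha f (Suc i) * \<psi> (u + m' - i)) = - S / f 0"
      unfolding S_def by (simp add: alpha_def sum_divide_distrib sum_negf)
    with assms(1) show ?thesis
      by (simp add: alpha_def field_simps)
  qed
  also have "\<dots> = (\<Sum>k<m. alpha f k * \<psi> (u + m - k))"
    unfolding m' by (subst sum.lessThan_Suc_shift) simp
  finally show ?thesis
    unfolding \<psi>_def .
qed

end

theorem theorem1:
  fixes M :: "'a measure" and Y :: "nat \<Rightarrow> 'a \<Rightarrow> nat" and f :: "nat \<Rightarrow> real" and m :: nat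
  assumes "prob_space M"
    and "m \<ge> 2"
    and "prob_space.indep_vars M (\<lambda>_. count_space UNIV) Y {1..}"
    and "\<And>j y. j \<ge> 1 \<Longrightarrow> measure M {\<omega> \<in> space M. Y j \<omega> = y} = f y"
    and "\<And>y. y > m \<Longrightarrow> f y = 0"
    and "f m > 0"
    and "prob_space.expectation M (\<lambda>\<omega>. real (Y 1 \<omega>)) < 1"
  shows "(\<forall>u::nat. ruin_prob M Y (u + m + 1)
            = (\<Sum>k<m. alpha f k * ruin_prob M Y (u + m - k)))
       \<and> (\<exists>b :: complex \<Rightarrow> nat \<Rightarrow> complex. \<forall>u::nat. u \<ge> 1 \<longrightarrow>
            complex_of_real (ruin_prob M Y u)
              = (\<Sum>z\<in>{z. poly (char_poly f m) z = 0}.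
                   \<Sum>j=1..order z (char_poly f m). b z j * of_nat u ^ (j - 1) * z ^ u))"
proof -
  interpret discrete_risk_model M Y f m
    using assms(1,3-5) by (intro discrete_risk_model.intro discrete_risk_model_axioms.intro)
  have "f 0 > 0"
    using assms(7) by (rule claim_distr_0_pos)
  then have rec: "\<And>u. ruin_prob M Y (u + m + 1) = (\<Sum>k<m. alpha f k * ruin_prob M Y (u + m - k))"
    using assms(2) by (intro ruin_prob_recurrence) auto
  have "alpha f (m - 1) \<noteq> 0"
    using assms(2,6) \<open>f 0 > 0\<close> by (simp add: alpha_def)
  with assms(2) show ?thesis
    using rec char_poly_recurrence_quasi_poly[of m f "ruin_prob M Y"] by auto
qed

end
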